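(* Let $k\ge2$ be an integer, let $1<p\le\pi^2(k-1/2)^2-1$, and define \[\psi_k(x)=\sin^p(\pi x)\Big(\frac1{(k-x)^p}+\frac1{(k+x-1)^p}\Big).\] Then $\psi_k$ is decreasing on $[1/2,1]$. *)

theory Defs
  imports "HOL-Analysis.Analysis"
begin

definition psi :: "nat \<Rightarrow> real \<Rightarrow> real \<Rightarrow> real" where
  "psi k p x = (sin (pi * x)) powr p *
      (1 / (real k - x) powr p + 1 / (real k + x - 1) powr p)"

end

theory Submission
  imports Defs
begin

text \<open>
  Put \<open>t = x - 1/2\<close> and \<open>c = k - 1/2\<close>, so that
  \<open>\<psi>\<^sub>k(x) = cos\<^sup>p(\<pi>t) ((c-t)\<^sup>-\<^sup>p + (c+t)\<^sup>-\<^sup>p)\<close> on \<open>0 \<le> t \<le> 1/2\<close>.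
  The sign of the derivative is that of
  \<open>cos(\<pi>t) ((c-t)\<^sup>-\<^sup>p\<^sup>-\<^sup>1 - (c+t)\<^sup>-\<^sup>p\<^sup>-\<^sup>1) - \<pi> sin(\<pi>t) ((c-t)\<^sup>-\<^sup>p + (c+t)\<^sup>-\<^sup>p)\<close>.
  Comparing logarithmic derivatives in \<open>t\<close> gives
  \<open>c (A - B) \<le> p t (A + B)\<close> for \<open>A = (c-t)\<^sup>-\<^sup>p\<close>, \<open>B = (c+t)\<^sup>-\<^sup>p\<close>, which reduces
  the claim to \<open>(p+1) t cos(\<pi>t) \<le> \<pi> (c\<^sup>2 - t\<^sup>2) sin(\<pi>t)\<close>. Since \<open>p + 1 \<le> \<pi>\<^sup>2c\<^sup>2\<close>,
  this follows from the Taylor estimate \<open>sin y - y cos y \<ge> y\<^sup>3/16\<close> on \<open>[0, \<pi>/2]\<close>.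
\<close>

lemma sin_ge_Taylor_4:
  fixes y :: real
  assumes "0 \<le> y"
  shows "y - y^3/6 - y^4/24 \<le> sin y"
proof -
  have "(\<Sum>m<4. sin_coeff m * y ^ m) = y - y^3/6"
    by (simp add: sin_coeff_def fact_numeral lessThan_nat_numeral)
  then have "\<bar>sin y - (y - y^3/6)\<bar> \<le> y^4/24"
    using Maclaurin_sin_bound[of y 4] by (simp add: fact_numeral)
  then show ?thesis by linarith
qed

lemma cos_le_Taylor_4:
  fixes y :: real
  shows "cos y \<le> 1 - y^2/2 + y^4/24"
proof -
  obtain s where s: "cos y = (\<Sum>m<4. cos_coeff m * y ^ m) + cos (s + 1/2 * real 4 * pi) / fact 4 * y ^ 4"
    using Maclaurin_cos_expansion[of y 4] by blast
  have "(\<Sum>m<4. cos_coeff m * y ^ m) = 1 - y^2/2"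
    by (simp add: cos_coeff_def fact_numeral lessThan_nat_numeral)
  with s have "cos y = 1 - y^2/2 + cos (s + 2 * pi) / 24 * y ^ 4"
    by (simp add: fact_numeral)
  moreover have "cos (s + 2 * pi) * y ^ 4 \<le> 1 * y ^ 4"
    by (rule mult_right_mono) auto
  ultimately show ?thesis by linarith
qed

lemma sin_minus_mult_cos_lower_bound:
  fixes y :: real
  assumes "0 \<le> y" "y \<le> pi/2"
  shows "y^3/16 \<le> sin y - y * cos y"
proof -
  have y2: "y \<le> 2" using assms pi_less_4 by linarith
  have "y^4/24 + y^5/24 = y^3 * (y/24 + y^2/24)"
    by (simp add: algebra_simps eval_nat_numeral)
  also have "\<dots> \<le> y^3 * (2/24 + 4/24)"
  proof (rule mult_left_mono)
    have "y^2 \<le> 2^2" by (rule power_mono) (use assms y2 in auto)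
    then show "y/24 + y^2/24 \<le> 2/24 + 4/24" using y2 by simp
  qed (use assms in simp)
  finally have "y^4/24 + y^5/24 \<le> y^3/4" by simp
  then have "y^3/16 \<le> y^3/3 - y^4/24 - y^5/24"
    using zero_le_power[OF assms(1), of 3] by linarith
  also have "\<dots> \<le> sin y - y * cos y"
  proof -
    have "y * cos y \<le> y * (1 - y^2/2 + y^4/24)"
      using cos_le_Taylor_4[of y] assms(1) by (rule mult_left_mono)
    then show ?thesis
      using sin_ge_Taylor_4[OF assms(1)] by (simp add: algebra_simps eval_nat_numeral)
  qed
  finally show ?thesis .
qed

lemma cos_mult_le_sin_mult:
  fixes t c p :: real
  assumes "0 \<le> t" "t \<le> 1/2" "3/2 \<le> c" "p + 1 \<le> pi^2 * c^2"
  shows "cos (pi * t) * (p + 1) * t \<le> pi * sin (pi * t) * (c^2 - t^2)"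
proof -
  define y where "y = pi * t"
  have y: "0 \<le> y" "y \<le> pi/2" using assms by (auto simp: y_def)
  have t: "t = y / pi" by (simp add: y_def)
  have "cos y * (p + 1) * t \<le> cos y * (pi^2 * c^2) * t"
    using y assms by (intro mult_right_mono mult_left_mono cos_ge_zero) auto
  also have "\<dots> = pi * (c^2 * (y * cos y))" by (simp add: t power2_eq_square)
  also have "\<dots> \<le> pi * (c^2 * sin y - t^2 * sin y)"
  proof -
    have c2: "9/4 \<le> c^2"
      using power_mono[OF assms(3), of 2] by (simp add: power2_eq_square)
    have "9 \<le> pi^2"
      using power_mono[of 3 pi 2] pi_gt3 by simp
    have "t^2 * sin y \<le> t^2 * y" using sin_x_le_x[OF y(1)] by (intro mult_left_mono) auto
    also have "\<dots> = y^3 / pi^2" by (simp add: t power2_eq_square eval_nat_numeral)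
    also have "\<dots> \<le> y^3 / 9"
      using \<open>9 \<le> pi^2\<close> y by (intro divide_left_mono) auto
    also have "\<dots> \<le> c^2 * (y^3/16)"
      using mult_right_mono[OF c2, of "y^3/16"] zero_le_power[OF y(1), of 3] by linarith
    also have "\<dots> \<le> c^2 * (sin y - y * cos y)"
      using sin_minus_mult_cos_lower_bound[OF y] by (intro mult_left_mono) auto
    finally have "c^2 * (y * cos y) \<le> c^2 * sin y - t^2 * sin y" by (simp add: algebra_simps)
    then show ?thesis by simp
  qed
  also have "\<dots> = pi * sin y * (c^2 - t^2)" by (simp add: algebra_simps)
  finally show ?thesis by (simp add: y_def)
qed

lemma powr_mult_affine_le:
  fixes t c p :: real
  assumes "0 \<le> t" "t < c" "1 \<le> p"
  shows "(c + t) powr p * (c - p * t) \<le> (c - t) powr p * (c + p * t)"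
proof (cases "c - p * t \<le> 0")
  case True
  have "(c + t) powr p * (c - p * t) \<le> 0" using True by (simp add: mult_nonneg_nonpos)
  also have "0 \<le> (c - t) powr p * (c + p * t)" using assms by simp
  finally show ?thesis .
next
  case False
  define \<phi> where "\<phi> s = p * ln (c - s) + ln (c + p * s) - p * ln (c + s) - ln (c - p * s)" for s
  have "\<phi> 0 \<le> \<phi> t"
  proof (rule DERIV_nonneg_imp_nondecreasing[OF assms(1)])
    fix s assume s: "0 \<le> s" "s \<le> t"
    have "p * s \<le> p * t" "0 \<le> p * s" using s assms by (auto intro: mult_left_mono)
    then have pos: "0 < c - s" "0 < c + p * s" "0 < c + s" "0 < c - p * s"
      using s assms False by linarith+
    have D: "(\<phi> has_real_derivative p * (-1/(c - s)) + p/(c + p * s) - p/(c + s) - (-p)/(c - p * s)) (at s)"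
      unfolding \<phi>_def using pos by (auto intro!: derivative_eq_intros)
    have "s^2 \<le> (p * s)^2" using s assms by (intro power_mono) (auto simp: mult_le_cancel_right1)
    moreover have "0 < c^2 - (p * s)^2"
      using mult_pos_pos[OF pos(4) pos(2)] by (simp add: power2_eq_square algebra_simps)
    ultimately have "2 * c / (c^2 - s^2) \<le> 2 * c / (c^2 - (p * s)^2)"
      using pos by (intro divide_left_mono mult_pos_pos) auto
    moreover have "1/(c - s) + 1/(c + s) = 2 * c / (c^2 - s^2)"
      "1/(c + p * s) + 1/(c - p * s) = 2 * c / (c^2 - (p * s)^2)"
      using pos by (simp_all add: field_simps power2_eq_square)
    ultimately have "p * (1/(c - s) + 1/(c + s)) \<le> p * (1/(c + p * s) + 1/(c - p * s))"
      using assms(3) by (intro mult_left_mono) auto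
    then show "\<exists>D. (\<phi> has_real_derivative D) (at s) \<and> 0 \<le> D"
      using D by (auto simp: field_simps)
  qed
  then have "p * ln (c + t) + ln (c - p * t) \<le> p * ln (c - t) + ln (c + p * t)"
    by (simp add: \<phi>_def)
  then have "exp (p * ln (c + t) + ln (c - p * t)) \<le> exp (p * ln (c - t) + ln (c + p * t))"
    by simp
  moreover have "0 < c + p * t" using assms mult_nonneg_nonneg[of p t] by linarith
  ultimately show ?thesis using assms False by (simp add: exp_add powr_def)
qed

lemma powr_neg_diff_le:
  fixes t c p :: real
  assumes "0 \<le> t" "t < c" "1 \<le> p"
  shows "c * ((c - t) powr (-p) - (c + t) powr (-p)) \<le> p * t * ((c - t) powr (-p) + (c + t) powr (-p))"
proof -
  define U V where "U = (c + t) powr p" and "V = (c - t) powr p"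
  have "0 < U" "0 < V" using assms by (auto simp: U_def V_def)
  have "U * (c - p * t) / (U * V) \<le> V * (c + p * t) / (U * V)"
    using powr_mult_affine_le[OF assms] \<open>0 < U\<close> \<open>0 < V\<close>
    by (intro divide_right_mono) (auto simp: U_def V_def)
  then have "c / V - p * t / V \<le> c / U + p * t / U"
    using \<open>0 < U\<close> \<open>0 < V\<close> by (simp add: diff_divide_distrib add_divide_distrib)
  then have "c * (1/V - 1/U) \<le> p * t * (1/V + 1/U)"
    by (simp add: right_diff_distrib distrib_left)
  then show ?thesis by (simp add: powr_minus_divide U_def V_def)
qed

lemma cos_powr_diff_le_sin_powr_sum:
  fixes t c p :: real
  assumes "0 \<le> t" "t \<le> 1/2" "3/2 \<le> c" "1 \<le> p" "p + 1 \<le> pi^2 * c^2"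
  shows "cos (pi * t) * ((c - t) powr (-p) / (c - t) - (c + t) powr (-p) / (c + t))
         \<le> pi * sin (pi * t) * ((c - t) powr (-p) + (c + t) powr (-p))"
proof -
  define A B where "A = (c - t) powr (-p)" and "B = (c + t) powr (-p)"
  have ct: "0 < c - t" "0 < c + t" "0 < c^2 - t^2"
    using assms by (auto simp: power2_eq_square algebra_simps intro!: mult_strict_mono)
  have "0 \<le> pi * t" "pi * t \<le> pi/2" using assms by auto
  then have "0 \<le> cos (pi * t)" using pi_gt_zero by (intro cos_ge_zero) linarith+
  have "A/(c - t) - B/(c + t) = (c * (A - B) + t * (A + B)) / (c^2 - t^2)"
    using ct by (simp add: field_simps power2_eq_square)
  also have "\<dots> \<le> ((p + 1) * t * (A + B)) / (c^2 - t^2)"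
    using powr_neg_diff_le[of t c p] assms ct
    by (intro divide_right_mono) (auto simp: algebra_simps A_def B_def)
  finally have "cos (pi * t) * (A/(c - t) - B/(c + t))
      \<le> (A + B) * (cos (pi * t) * (p + 1) * t) / (c^2 - t^2)"
    using \<open>0 \<le> cos (pi * t)\<close> by (auto dest: mult_left_mono simp: algebra_simps)
  also have "\<dots> \<le> (A + B) * (pi * sin (pi * t) * (c^2 - t^2)) / (c^2 - t^2)"
    using cos_mult_le_sin_mult[OF assms(1,2,3,5)] ct
    by (intro divide_right_mono mult_left_mono) (auto simp: A_def B_def)
  also have "\<dots> = pi * sin (pi * t) * (A + B)" using ct by simp
  finally show ?thesis by (simp add: A_def B_def)
qed

lemma has_real_derivative_psi:
  fixes k :: nat and p z :: real
  assumes "0 < sin (pi * z)" "z < real k" "1 - real k < z"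
  defines "a \<equiv> real k - z" and "b \<equiv> real k + z - 1"
  shows "(psi k p has_real_derivative
           p * sin (pi * z) powr (p - 1) * (pi * cos (pi * z) * (a powr (-p) + b powr (-p))
             + sin (pi * z) * (a powr (-p) / a - b powr (-p) / b))) (at z)"
proof -
  define S where "S = sin (pi * z)"
  have "0 < a" "0 < b" using assms by (auto simp: a_def b_def)
  have psi_eq: "psi k p = (\<lambda>x. sin (pi * x) powr p * ((real k - x) powr (-p) + (real k + x - 1) powr (-p)))"
    by (auto simp: psi_def powr_minus_divide)
  have dS: "((\<lambda>x. sin (pi * x) powr p) has_real_derivative p * S powr (p - 1) * (cos (pi * z) * pi)) (at z)"
    using assms(1) by (auto intro!: derivative_eq_intros simp: S_def)
  have da: "((\<lambda>x. (real k - x) powr (-p)) has_real_derivative (-p) * a powr (-p - 1) * (-1)) (at z)"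
    using \<open>0 < a\<close> by (auto intro!: derivative_eq_intros simp: a_def)
  have db: "((\<lambda>x. (real k + x - 1) powr (-p)) has_real_derivative (-p) * b powr (-p - 1)) (at z)"
    using \<open>0 < b\<close> by (auto intro!: derivative_eq_intros simp: b_def)
  have "a powr (-p - 1) = a powr (-p) / a" "b powr (-p - 1) = b powr (-p) / b" "S powr p = S * S powr (p - 1)"
    using \<open>0 < a\<close> \<open>0 < b\<close> assms(1) by (simp_all add: powr_diff S_def)
  then show ?thesis
    unfolding psi_eq using DERIV_mult[OF dS DERIV_add[OF da db]]
    by (simp add: S_def a_def b_def algebra_simps)
qed

lemma psi_derivative_nonpos:
  fixes k :: nat and p z :: real
  assumes "k \<ge> 2" and "1 < p" and "p \<le> pi\<^sup>2 * (real k - 1/2)\<^sup>2 - 1"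
    and "1/2 \<le> z" "z < 1"
  shows "\<exists>D. (psi k p has_real_derivative D) (at z) \<and> D \<le> 0"
proof -
  define t c where "t = z - 1/2" and "c = real k - 1/2"
  have "real k \<ge> 2" using assms(1) by simp
  have S: "0 < sin (pi * z)" using assms by (intro sin_gt_zero) auto
  have "sin (pi * z) = cos (pi * t)" "cos (pi * z) = - sin (pi * t)"
    by (simp_all add: t_def right_diff_distrib cos_diff sin_diff)
  moreover have "real k - z = c - t" "real k + z - 1 = c + t"
    by (simp_all add: t_def c_def)
  moreover note has_real_derivative_psi[OF S, of k p]
  moreover have "cos (pi * t) * ((c - t) powr (-p) / (c - t) - (c + t) powr (-p) / (c + t))
         \<le> pi * sin (pi * t) * ((c - t) powr (-p) + (c + t) powr (-p))"
    using assms \<open>real k \<ge> 2\<close> by (intro cos_powr_diff_le_sin_powr_sum) (auto simp: t_def c_def)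
  moreover have "0 \<le> p * cos (pi * t) powr (p - 1)" using assms by simp
  ultimately show ?thesis
    using assms \<open>real k \<ge> 2\<close> by (auto intro!: exI mult_nonneg_nonpos)
qed

lemma psi_nonneg:
  assumes "0 \<le> x" "x \<le> 1"
  shows "0 \<le> psi k p x"
  using assms unfolding psi_def by (intro mult_nonneg_nonneg add_nonneg_nonneg sin_ge_zero) auto

theorem corollary2:
  fixes k :: nat and p :: real
  assumes "k \<ge> 2" and "1 < p" and "p \<le> pi\<^sup>2 * (real k - 1/2)\<^sup>2 - 1"
  shows "antimono_on {1/2..1} (psi k p)"
proof (rule monotone_onI)
  fix x y :: real
  assume xy: "x \<in> {1/2..1}" "y \<in> {1/2..1}" "x \<le> y"
  show "psi k p y \<le> psi k p x"
  proof (cases "y = 1")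
    case True
    then have "psi k p y = 0" using assms by (simp add: psi_def)
    then show ?thesis using psi_nonneg[of x k p] xy by simp
  next
    case False
    show ?thesis
      using xy False assms
      by (intro DERIV_nonpos_imp_nonincreasing[OF xy(3)] psi_derivative_nonpos) auto
  qed
qed

end
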